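(* Let $f:\mathbb{R}^n\to\mathbb{R}$ be $C^2$ smooth, $\lambda>0$, $h(x)=\lambda\|x\|_1$, $t>0$, and let $x^*$ be a root of $F_{\mathrm{PGM}}(x):=x-\mathrm{prox}_{th}(x-t\nabla f(x))$. Suppose strict complementarity holds at $x^*$, i.e. there is no index $i$ with $x^*_i=0$ and $|[\nabla f(x^* )]_i|=\lambda$. Then there exists $b>0$ such that the Jacobian of $\mathrm{prox}_{th}$ exists and is constant on the set $\{x-t\nabla f(x): x\in\bar B(x^*,b)\}$.
   Context: $\mathrm{prox}_{th}(y)=\arg\min_x\{h(x)+\frac{1}{2t}\|x-y\|^2\}$ (componentwise soft thresholding at level $t\lambda$). $\bar B(x,r)$ is the closed Euclidean ball of radius $r$ centered at $x$. *)

theory Defs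
  imports "HOL-Analysis.Analysis"
begin

definition l1norm :: "real^'n \<Rightarrow> real" where
  "l1norm x = (\<Sum>i\<in>UNIV. \<bar>x $ i\<bar>)"

definition prox_l1 :: "real \<Rightarrow> real \<Rightarrow> real^'n \<Rightarrow> real^'n" where
  "prox_l1 lam t y =
     arg_min (\<lambda>z. lam * l1norm z + (1 / (2 * t)) * (norm (z - y))\<^sup>2) (\<lambda>_. True)"

end

theory Submission
  imports Defs
begin

text \<open>The proximal map of \<open>t\<lambda>\<parallel>\<cdot>\<parallel>\<^sub>1\<close> is componentwise soft thresholding at level \<open>t\<lambda>\<close>,
  and soft thresholding is affine near every point different from \<open>\<plusminus>t\<lambda>\<close>. At a root \<open>x\<^sup>*\<close>
  we have \<open>x\<^sup>* = prox(y\<^sup>*)\<close> with \<open>y\<^sup>* = x\<^sup>* - t\<nabla>f(x\<^sup>*)\<close>: a component with \<open>x\<^sup>*\<^sub>i \<noteq> 0\<close>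
  forces \<open>|y\<^sup>*\<^sub>i| > t\<lambda>\<close>, and for \<open>x\<^sup>*\<^sub>i = 0\<close> strict complementarity gives \<open>|y\<^sup>*\<^sub>i| \<noteq> t\<lambda>\<close>.
  So the prox is affine on a ball around \<open>y\<^sup>*\<close>, with a constant diagonal 0/1 Jacobian, and by
  continuity of \<open>x \<mapsto> x - t\<nabla>f(x)\<close> a small ball around \<open>x\<^sup>*\<close> is mapped into that ball.\<close>

definition soft_threshold :: "real \<Rightarrow> real \<Rightarrow> real" where
  "soft_threshold c y = (if y > c then y - c else if y < -c then y + c else 0)"

lemma soft_threshold_nonzero_iff:
  assumes "c \<ge> 0"
  shows "soft_threshold c y \<noteq> 0 \<longleftrightarrow> \<bar>y\<bar> > c"
  using assms by (auto simp: soft_threshold_def)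

lemma soft_threshold_minimizes:
  assumes "c \<ge> 0"
  shows "2*c*\<bar>soft_threshold c y\<bar> + (soft_threshold c y - y)\<^sup>2 + (a - soft_threshold c y)\<^sup>2
         \<le> 2*c*\<bar>a\<bar> + (a - y)\<^sup>2"
proof -
  consider "y > c" | "y < -c" | "\<bar>y\<bar> \<le> c" by linarith
  then show ?thesis
  proof cases
    case 1
    then have "2*c*\<bar>a\<bar> + (a - y)\<^sup>2 = 2*c*\<bar>soft_threshold c y\<bar> + (soft_threshold c y - y)\<^sup>2
        + (a - soft_threshold c y)\<^sup>2 + 2*c*(\<bar>a\<bar> - a)"
      using assms by (simp add: soft_threshold_def power2_eq_square algebra_simps)
    then show ?thesis using assms by simp
  next
    case 2
    then have "2*c*\<bar>a\<bar> + (a - y)\<^sup>2 = 2*c*\<bar>soft_threshold c y\<bar> + (soft_threshold c y - y)\<^sup>2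
        + (a - soft_threshold c y)\<^sup>2 + 2*c*(\<bar>a\<bar> + a)"
      using assms by (simp add: soft_threshold_def power2_eq_square algebra_simps)
    then show ?thesis using assms by simp
  next
    case 3
    then have "soft_threshold c y = 0" by (auto simp: soft_threshold_def)
    moreover have "a*y \<le> \<bar>a\<bar>*c"
      using 3 by (metis abs_ge_self abs_mult mult_left_mono abs_ge_zero order_trans)
    ultimately show ?thesis by (simp add: power2_eq_square algebra_simps)
  qed
qed

lemma soft_threshold_local_affine:
  assumes "c \<ge> 0" and "\<bar>z - y\<bar> < \<bar>\<bar>y\<bar> - c\<bar>"
  shows "soft_threshold c z = soft_threshold c y + (if \<bar>y\<bar> > c then z - y else 0)"
  using assms by (auto simp: soft_threshold_def split: if_splits)

lemma power2_norm_vec_eq_sum: "(norm (x :: real^'n))\<^sup>2 = (\<Sum>i\<in>UNIV. (x$i)\<^sup>2)"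
  unfolding power2_norm_eq_inner inner_vec_def by (simp add: power2_eq_square)

lemma prox_l1_objective_scaled:
  assumes "t > 0"
  shows "2*t * (lam * l1norm z + (1 / (2 * t)) * (norm (z - y :: real^'n))\<^sup>2)
         = (\<Sum>i\<in>UNIV. 2*(t*lam)*\<bar>z$i\<bar> + (z$i - y$i)\<^sup>2)"
  using assms
  by (simp add: l1norm_def power2_norm_vec_eq_sum sum.distrib sum_distrib_left algebra_simps)

lemma prox_l1_eq_soft_threshold:
  fixes y :: "real^'n"
  assumes "lam \<ge> 0" and "t > 0"
  shows "prox_l1 lam t y = (\<chi> i. soft_threshold (t*lam) (y$i))"
proof -
  define S :: "real^'n" where "S = (\<chi> i. soft_threshold (t*lam) (y$i))"
  define F where "F = (\<lambda>z::real^'n. lam * l1norm z + (1 / (2 * t)) * (norm (z - y))\<^sup>2)"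
  have quadratic_growth: "2*t * F S + (norm (z - S))\<^sup>2 \<le> 2*t * F z" for z
  proof -
    have "2*t * F S + (norm (z - S))\<^sup>2
        = (\<Sum>i\<in>UNIV. 2*(t*lam)*\<bar>S$i\<bar> + (S$i - y$i)\<^sup>2 + (z$i - S$i)\<^sup>2)"
      unfolding F_def prox_l1_objective_scaled[OF \<open>t > 0\<close>]
      by (simp add: power2_norm_vec_eq_sum sum.distrib)
    also have "\<dots> \<le> (\<Sum>i\<in>UNIV. 2*(t*lam)*\<bar>z$i\<bar> + (z$i - y$i)\<^sup>2)"
      using assms by (intro sum_mono) (simp add: S_def soft_threshold_minimizes)
    finally show ?thesis unfolding F_def prox_l1_objective_scaled[OF \<open>t > 0\<close>] .
  qed
  have strict_min: "F S < F z" if "z \<noteq> S" for z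
  proof -
    have "(norm (z - S))\<^sup>2 > 0" using that by simp
    then have "2*t * F S < 2*t * F z" using quadratic_growth[of z] by linarith
    then show ?thesis using \<open>t > 0\<close> by simp
  qed
  have "arg_min F (\<lambda>_. True) = S"
  proof (rule arg_minI)
    show "\<not> F z < F S" for z
      using strict_min[of z] by (cases "z = S") auto
    show "x = S" if "\<forall>z. True \<longrightarrow> \<not> F z < F x" for x
      using that strict_min by blast
  qed simp
  then show ?thesis unfolding prox_l1_def F_def[symmetric] S_def .
qed

lemma prox_l1_locally_constant_jacobian:
  fixes y :: "real^'n"
  assumes "lam \<ge> 0" and "t > 0" and off_threshold: "\<And>i. \<bar>y$i\<bar> \<noteq> t*lam"
  obtains \<delta> J where "\<delta> > 0"
    and "\<And>z. z \<in> ball y \<delta> \<Longrightarrow> (prox_l1 lam t has_derivative (\<lambda>v. J *v v)) (at z)"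
proof -
  define \<delta> where "\<delta> = Min (range (\<lambda>i. \<bar>\<bar>y$i\<bar> - t*lam\<bar>))"
  have "\<delta> > 0" unfolding \<delta>_def using off_threshold by (subst Min_gr_iff) auto
  have \<delta>_le: "\<delta> \<le> \<bar>\<bar>y$i\<bar> - t*lam\<bar>" for i unfolding \<delta>_def by (rule Min_le) auto
  define J :: "real^'n^'n" where "J = (\<chi> i j. if i = j \<and> \<bar>y$i\<bar> > t*lam then 1 else 0)"
  have J_apply: "(J *v v)$i = (if \<bar>y$i\<bar> > t*lam then v$i else 0)" for v i
    unfolding J_def matrix_vector_mult_def
    by (simp add: if_distrib[of "\<lambda>a. a * _"] cong: if_cong)
  have affine: "prox_l1 lam t z = prox_l1 lam t y + J *v (z - y)" if "z \<in> ball y \<delta>" for z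
  proof -
    have "\<bar>z$i - y$i\<bar> < \<bar>\<bar>y$i\<bar> - t*lam\<bar>" for i
      using that \<delta>_le[of i] component_le_norm_cart[of "z - y" i]
      by (simp add: dist_norm norm_minus_commute)
    then have "soft_threshold (t*lam) (z$i)
        = soft_threshold (t*lam) (y$i) + (if \<bar>y$i\<bar> > t*lam then z$i - y$i else 0)" for i
      using assms by (intro soft_threshold_local_affine) auto
    then show ?thesis
      using assms by (simp add: prox_l1_eq_soft_threshold vec_eq_iff J_apply)
  qed
  have "(prox_l1 lam t has_derivative (\<lambda>v. J *v v)) (at z)" if "z \<in> ball y \<delta>" for z
  proof (rule has_derivative_transform_within_open[OF _ open_ball that])
    show "((\<lambda>z. prox_l1 lam t y + J *v (z - y)) has_derivative (\<lambda>v. J *v v)) (at z)"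
    proof -
      have "((\<lambda>z. J *v (z - y)) has_derivative (\<lambda>v. J *v (v - 0))) (at z)"
        by (rule bounded_linear.has_derivative[OF matrix_vector_mul_bounded_linear])
          (intro derivative_intros)
      from has_derivative_add[OF has_derivative_const this] show ?thesis by simp
    qed
  qed (simp add: affine)
  with \<open>\<delta> > 0\<close> show thesis by (rule that)
qed

theorem lemma3p4:
  fixes f :: "real^'n \<Rightarrow> real" and g :: "real^'n \<Rightarrow> real^'n"
    and lam t :: real and xs :: "real^'n"
  assumes grad: "\<And>x. (f has_derivative (\<lambda>h. g x \<bullet> h)) (at x)"
    and C2: "\<exists>H :: real^'n \<Rightarrow> ((real^'n) \<Rightarrow>\<^sub>L (real^'n)).
               (\<forall>x. (g has_derivative blinfun_apply (H x)) (at x)) \<and> continuous_on UNIV H"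
    and lam_pos: "lam > 0" and t_pos: "t > 0"
    and root: "xs - prox_l1 lam t (xs - t *\<^sub>R g xs) = 0"
    and strict_compl: "\<not> (\<exists>i. xs $ i = 0 \<and> \<bar>g xs $ i\<bar> = lam)"
  shows "\<exists>b > 0. \<exists>J :: real^'n^'n.
           \<forall>y \<in> (\<lambda>x. x - t *\<^sub>R g x) ` cball xs b.
             (prox_l1 lam t has_derivative (\<lambda>v. J *v v)) (at y)"
proof -
  have "lam \<ge> 0" using lam_pos by simp
  define ys where "ys = xs - t *\<^sub>R g xs"
  have xs_soft: "xs$i = soft_threshold (t*lam) (ys$i)" for i
    using root by (simp add: ys_def prox_l1_eq_soft_threshold[OF \<open>lam \<ge> 0\<close> t_pos] vec_eq_iff)
  have "\<bar>ys$i\<bar> \<noteq> t*lam" for i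
  proof (cases "xs$i = 0")
    case True
    then show ?thesis using strict_compl t_pos by (auto simp: ys_def abs_mult)
  next
    case False
    then show ?thesis using xs_soft soft_threshold_nonzero_iff[of "t*lam"] \<open>lam \<ge> 0\<close> t_pos by force
  qed
  then obtain \<delta> J where "\<delta> > 0"
    and J: "\<And>z. z \<in> ball ys \<delta> \<Longrightarrow> (prox_l1 lam t has_derivative (\<lambda>v. J *v v)) (at z)"
    using prox_l1_locally_constant_jacobian[OF \<open>lam \<ge> 0\<close> t_pos] by blast
  have "isCont g xs"
    using C2 has_derivative_continuous by blast
  then have "continuous (at xs) (\<lambda>x. x - t *\<^sub>R g x)"
    by (intro continuous_intros)
  then obtain b where "b > 0" and b: "\<And>x. dist x xs < b \<Longrightarrow> dist (x - t *\<^sub>R g x) ys < \<delta>"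
    using \<open>\<delta> > 0\<close> unfolding continuous_at_eps_delta ys_def by blast
  show ?thesis
  proof (intro exI[of _ "b/2"] exI[of _ J] conjI ballI)
    show "b/2 > 0" using \<open>b > 0\<close> by simp
    fix y assume "y \<in> (\<lambda>x. x - t *\<^sub>R g x) ` cball xs (b/2)"
    then obtain x where "y = x - t *\<^sub>R g x" and "dist xs x \<le> b/2" by auto
    then show "(prox_l1 lam t has_derivative (\<lambda>v. J *v v)) (at y)"
      using b[of x] \<open>b > 0\<close> by (intro J) (simp add: dist_commute)
  qed
qed

end
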